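(* Let $m>1$. There is $D_0>0$ and $C>0$ such that for every real $\widehat d\ge D_0$ and all continuous $2\pi$-periodic functions $\phi,\varphi$ on $\mathbb{R}$ with $\int_0^{2\pi}\varphi=0$, the system $$\begin{cases}-(m+1)f+(f''-g')+\widehat d(f+g')=\phi & \text{on }(0,2\pi),\\ g+(f'-g)-\widehat d(f'+g'')=\varphi&\text{on }(0,2\pi),\\ f(0)=f(2\pi),\ f'(0)=f'(2\pi),\ g(0)=g(2\pi),\ g'(0)=g'(2\pi)\end{cases}$$ has a unique solution $(f,g)\in C^2([0,2\pi])^2$ with $\int_0^{2\pi}g=0$, and $$\|f\|_{C^2([0,2\pi])}+\|g\|_{C^2([0,2\pi])}\le C\big(\|\phi\|_{C^0([0,2\pi])}+\|\varphi\|_{C^0([0,2\pi])}\big).$$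
   Context: In the paper $\widehat d=-\frac{\Psi'(d)}{\Psi(d)}d$ where $d\sim m\ln K\to\infty$, so "$\widehat d$ large" corresponds to "$K$ sufficiently large"; the constant $C$ does not depend on $\widehat d$. *)

theory Defs
  imports "HOL-Analysis.Analysis"
begin

definition I2pi :: "real set" where "I2pi = {0..2*pi}"

definition C2_on :: "real set \<Rightarrow> (real \<Rightarrow> real) \<Rightarrow> bool" where
  "C2_on S f \<longleftrightarrow> (\<exists>f1 f2. (\<forall>x\<in>S. (f has_real_derivative f1 x) (at x within S)
        \<and> (f1 has_real_derivative f2 x) (at x within S)) \<and> continuous_on S f2)"

definition D1 :: "real set \<Rightarrow> (real \<Rightarrow> real) \<Rightarrow> real \<Rightarrow> real" where
  "D1 S f x = vector_derivative f (at x within S)"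

definition D2 :: "real set \<Rightarrow> (real \<Rightarrow> real) \<Rightarrow> real \<Rightarrow> real" where
  "D2 S f = D1 S (D1 S f)"

definition supnorm :: "real set \<Rightarrow> (real \<Rightarrow> real) \<Rightarrow> real" where
  "supnorm S h = (SUP x\<in>S. \<bar>h x\<bar>)"

definition C2norm :: "real set \<Rightarrow> (real \<Rightarrow> real) \<Rightarrow> real" where
  "C2norm S f = supnorm S f + supnorm S (D1 S f) + supnorm S (D2 S f)"

definition is_sol :: "real \<Rightarrow> real \<Rightarrow> (real \<Rightarrow> real) \<Rightarrow> (real \<Rightarrow> real)
    \<Rightarrow> (real \<Rightarrow> real) \<Rightarrow> (real \<Rightarrow> real) \<Rightarrow> bool" where
  "is_sol m dh phi vphi f g \<longleftrightarrow>
     C2_on I2pi f \<and> C2_on I2pi g \<and>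
     (\<forall>x\<in>{0<..<2*pi}.
        -(m+1) * f x + (D2 I2pi f x - D1 I2pi g x) + dh * (f x + D1 I2pi g x) = phi x \<and>
        g x + (D1 I2pi f x - g x) - dh * (D1 I2pi f x + D2 I2pi g x) = vphi x) \<and>
     f 0 = f (2*pi) \<and> D1 I2pi f 0 = D1 I2pi f (2*pi) \<and>
     g 0 = g (2*pi) \<and> D1 I2pi g 0 = D1 I2pi g (2*pi) \<and>
     integral I2pi g = 0"

end

theory Submission
  imports Defs
begin

text \<open>Integrating the second equation once gives \<open>d g' + (d-1) f + V = c\<close> with \<open>V\<close> the primitive
  of \<open>vphi\<close>; substituting \<open>g'\<close> into the first equation leaves \<open>f'' = \<mu> f + h\<close> with
  \<open>\<mu> = m - 1 + 1/d > 0\<close>, and the constant \<open>c\<close> is forced by the periodicity of \<open>g\<close>. The maximum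
  principle for periodic solutions gives \<open>|f| \<le> sup |h| / \<mu>\<close>; then \<open>f''\<close> is bounded by the
  equation, \<open>f'\<close> and \<open>g\<close> because they vanish somewhere (by periodicity and by the mean-zero
  condition), and \<open>g', g''\<close> by the first integral and the second equation. Uniqueness follows
  by linearity, and existence by solving \<open>f'' = \<mu> f + h\<close> by variation of constants and
  reversing the elimination.\<close>

definition has_deriv_on :: "real set \<Rightarrow> (real \<Rightarrow> real) \<Rightarrow> (real \<Rightarrow> real) \<Rightarrow> bool" where
  "has_deriv_on S f f' \<longleftrightarrow> (\<forall>x\<in>S. (f has_real_derivative f' x) (at x within S))"

lemma has_deriv_onD: "has_deriv_on S f f' \<Longrightarrow> x \<in> S \<Longrightarrow> (f has_real_derivative f' x) (at x within S)"
  by (simp add: has_deriv_on_def)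

lemma has_deriv_on_continuous_on: "has_deriv_on S f f' \<Longrightarrow> continuous_on S f"
  unfolding has_deriv_on_def using DERIV_continuous continuous_on_eq_continuous_within by blast

lemma has_deriv_on_diff:
  "has_deriv_on S f f' \<Longrightarrow> has_deriv_on S g g' \<Longrightarrow> has_deriv_on S (\<lambda>x. f x - g x) (\<lambda>x. f' x - g' x)"
  by (simp add: has_deriv_on_def DERIV_diff)

lemma has_deriv_on_minus: "has_deriv_on S f f' \<Longrightarrow> has_deriv_on S (\<lambda>x. - f x) (\<lambda>x. - f' x)"
  by (simp add: has_deriv_on_def DERIV_minus)

lemma has_deriv_on_cong:
  assumes "has_deriv_on S f f'" "\<And>x. x \<in> S \<Longrightarrow> g x = f x"
  shows "has_deriv_on S g f'"
  unfolding has_deriv_on_def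
proof
  fix x assume "x \<in> S"
  then show "(g has_real_derivative f' x) (at x within S)"
    using has_field_derivative_transform_within[OF has_deriv_onD[OF assms(1)] zero_less_one] assms(2)
    by simp
qed

lemma has_deriv_on_subset: "has_deriv_on S f f' \<Longrightarrow> T \<subseteq> S \<Longrightarrow> has_deriv_on T f f'"
  unfolding has_deriv_on_def using DERIV_subset by blast

lemma has_deriv_on_integral:
  "continuous_on {a..b} F \<Longrightarrow> has_deriv_on {a..b} (\<lambda>x. integral {a..x} F) F"
  by (simp add: has_deriv_on_def integral_has_real_derivative)

lemma D1_eq_on_interval:
  assumes "a < b" "has_deriv_on {a..b} f f'" "x \<in> {a..b}"
  shows "D1 {a..b} f x = f' x"
  unfolding D1_def using assms
  by (auto intro!: vector_derivative_within_closed_interval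
      simp: has_deriv_on_def has_real_derivative_iff_has_vector_derivative)

lemma D2_eq_on_interval:
  assumes "a < b" "has_deriv_on {a..b} f f1" "has_deriv_on {a..b} f1 f2" "x \<in> {a..b}"
  shows "D2 {a..b} f x = f2 x"
proof -
  have "has_deriv_on {a..b} (D1 {a..b} f) f2"
    using assms(3) by (rule has_deriv_on_cong) (use D1_eq_on_interval[OF assms(1,2)] in simp)
  then show ?thesis unfolding D2_def using D1_eq_on_interval assms(1,4) by blast
qed

lemma C2_on_intervalD:
  assumes "a < b" "C2_on {a..b} f"
  shows "has_deriv_on {a..b} f (D1 {a..b} f)" "has_deriv_on {a..b} (D1 {a..b} f) (D2 {a..b} f)"
    "continuous_on {a..b} (D2 {a..b} f)"
proof -
  obtain f1 f2 where f1: "has_deriv_on {a..b} f f1" and f2: "has_deriv_on {a..b} f1 f2"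
    and "continuous_on {a..b} f2"
    using assms(2) unfolding C2_on_def has_deriv_on_def by blast
  have D1: "\<And>x. x \<in> {a..b} \<Longrightarrow> D1 {a..b} f x = f1 x" by (rule D1_eq_on_interval[OF assms(1) f1])
  have D2: "\<And>x. x \<in> {a..b} \<Longrightarrow> D2 {a..b} f x = f2 x" by (rule D2_eq_on_interval[OF assms(1) f1 f2])
  show "has_deriv_on {a..b} f (D1 {a..b} f)"
    using f1 D1 by (simp add: has_deriv_on_def)
  show "has_deriv_on {a..b} (D1 {a..b} f) (D2 {a..b} f)"
    using has_deriv_on_cong[OF f2 D1] D2 by (simp add: has_deriv_on_def)
  show "continuous_on {a..b} (D2 {a..b} f)"
    using \<open>continuous_on {a..b} f2\<close> D2 continuous_on_cong by blast
qed

lemma abs_diff_le_of_deriv_bound: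
  assumes "has_deriv_on {a..b} f f'" "\<forall>x\<in>{a..b}. \<bar>f' x\<bar> \<le> B" "x \<in> {a..b}" "y \<in> {a..b}"
  shows "\<bar>f x - f y\<bar> \<le> (b - a) * B"
proof -
  have "\<bar>f x - f y\<bar> \<le> B * \<bar>x - y\<bar>"
    using field_differentiable_bound[of "{a..b}" f f' B x y] assms by (simp add: has_deriv_on_def)
  also have "\<dots> \<le> B * (b - a)"
    using assms(2-4) by (intro mult_left_mono) (auto intro: order.trans[OF abs_ge_zero])
  finally show ?thesis by (simp add: mult.commute)
qed

lemma abs_integral_upper_le:
  fixes F :: "real \<Rightarrow> real"
  assumes "continuous_on {a..b} F" "\<forall>x\<in>{a..b}. \<bar>F x\<bar> \<le> B" "x \<in> {a..b}"
  shows "\<bar>integral {a..x} F\<bar> \<le> (b - a) * B"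
proof -
  have "a \<in> {a..b}" using assms(3) by auto
  then show ?thesis
    using abs_diff_le_of_deriv_bound[OF has_deriv_on_integral[OF assms(1)] assms(2,3), of a] by simp
qed

lemma periodic_deriv_has_zero:
  assumes "a < b" "has_deriv_on {a..b} f f'" "f a = f b"
  obtains \<xi> where "\<xi> \<in> {a..b}" "f' \<xi> = 0"
proof -
  obtain \<xi> where "\<xi> \<in> {a<..<b}" "f b - f a = f' \<xi> * (b - a)"
    using mvt_simple[of a b f "\<lambda>x. (*) (f' x)"] assms(1,2)
    by (auto simp: has_deriv_on_def has_field_derivative_def mult.commute)
  moreover from this have "f' \<xi> = 0" using assms(1,3) by simp
  ultimately show ?thesis using that[of \<xi>] by simp
qed

lemma periodic_deriv_has_integral_zero:
  assumes "a \<le> b" "has_deriv_on {a..b} f f'" "f a = f b"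
  shows "(f' has_integral 0) {a..b}"
  using fundamental_theorem_of_calculus[of a b f f'] assms
  by (simp add: has_deriv_on_def has_real_derivative_iff_has_vector_derivative)

lemma eq_on_interval_of_eq_on_interior:
  fixes F G :: "real \<Rightarrow> real"
  assumes "a < b" "continuous_on {a..b} F" "continuous_on {a..b} G" "\<forall>x\<in>{a<..<b}. F x = G x"
    "x \<in> {a..b}"
  shows "F x = G x"
  using continuous_constant_on_closure[of "{a<..<b}" "\<lambda>x. F x - G x" 0 x] assms
  by (auto intro: continuous_intros)

lemma deriv_nonpos_at_max_right:
  assumes "(f has_real_derivative D) (at x within {a..b})" "a \<le> x" "x < b"
    "\<forall>y\<in>{a..b}. f y \<le> f x"
  shows "D \<le> 0"
proof (rule ccontr)
  assume "\<not> D \<le> 0"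
  then obtain \<delta> where "\<delta> > 0" and inc: "\<forall>h>0. x + h \<in> {a..b} \<longrightarrow> h < \<delta> \<longrightarrow> f x < f (x + h)"
    using has_real_derivative_pos_inc_right[OF assms(1)] by auto
  define t where "t = min (\<delta>/2) ((b - x)/2)"
  have "t > 0" "t < \<delta>" "x + t \<in> {a..b}" using \<open>\<delta> > 0\<close> assms(2,3) by (auto simp: t_def min_def field_simps)
  then show False using inc assms(4) by fastforce
qed

lemma deriv_nonneg_at_max_left:
  assumes "(f has_real_derivative D) (at x within {a..b})" "a < x" "x \<le> b"
    "\<forall>y\<in>{a..b}. f y \<le> f x"
  shows "D \<ge> 0"
proof (rule ccontr)
  assume "\<not> D \<ge> 0"
  then obtain \<delta> where "\<delta> > 0" and dec: "\<forall>h>0. x - h \<in> {a..b} \<longrightarrow> h < \<delta> \<longrightarrow> f x < f (x - h)"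
    using has_real_derivative_neg_dec_left[OF assms(1)] by auto
  define t where "t = min (\<delta>/2) ((x - a)/2)"
  have "t > 0" "t < \<delta>" "x - t \<in> {a..b}" using \<open>\<delta> > 0\<close> assms(2,3) by (auto simp: t_def min_def field_simps)
  then show False using dec assms(4) by fastforce
qed

lemma second_deriv_nonpos_at_max:
  assumes f: "has_deriv_on {a..b} f f1" and f1: "(f1 has_real_derivative D) (at x within {a..b})"
    and "a \<le> x" "x < b" "f1 x = 0" and max: "\<forall>y\<in>{a..b}. f y \<le> f x"
  shows "D \<le> 0"
proof (rule ccontr)
  assume "\<not> D \<le> 0"
  then obtain \<delta> where "\<delta> > 0" and inc: "\<forall>h>0. x + h \<in> {a..b} \<longrightarrow> h < \<delta> \<longrightarrow> f1 x < f1 (x + h)"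
    using has_real_derivative_pos_inc_right[OF f1] by auto
  define t where "t = min (\<delta>/2) ((b - x)/2)"
  have t: "t > 0" "t < \<delta>" "x + t \<in> {a..b}" using \<open>\<delta> > 0\<close> assms(3,4) by (auto simp: t_def min_def field_simps)
  have "has_deriv_on {x..x+t} f f1"
    using f t assms(3) by (intro has_deriv_on_subset[OF f]) auto
  then obtain \<xi> where \<xi>: "\<xi> \<in> {x<..<x+t}" "f (x + t) - f x = f1 \<xi> * t"
    using mvt_simple[of x "x + t" f "\<lambda>y. (*) (f1 y)"] t(1)
    by (auto simp: has_deriv_on_def has_field_derivative_def mult.commute)
  have "f1 \<xi> > 0"
    using inc[rule_format, of "\<xi> - x"] \<xi>(1) t assms(3,5) by auto
  then have "f1 \<xi> * t > 0" using t(1) by simp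
  then have "f (x + t) > f x" using \<xi>(2) by linarith
  then show False using max t(3) by fastforce
qed

text \<open>At a maximum point of \<open>f\<close> we have \<open>f' = 0\<close> and \<open>f'' \<le> 0\<close>; periodicity of \<open>f\<close> and \<open>f'\<close>
  lets us move an endpoint maximum to the other endpoint as needed.\<close>

lemma periodic_max_principle:
  assumes "a < b" and f: "has_deriv_on {a..b} f f1" "has_deriv_on {a..b} f1 f2"
    and per: "f a = f b" "f1 a = f1 b"
    and eq: "\<forall>x\<in>{a..b}. f2 x = \<mu> * f x + h x" and "\<mu> > 0" and h: "\<forall>x\<in>{a..b}. \<bar>h x\<bar> \<le> H"
    and "x \<in> {a..b}"
  shows "f x \<le> H / \<mu>"
proof -
  obtain xm where xm: "xm \<in> {a..b}" "\<forall>y\<in>{a..b}. f y \<le> f xm"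
    using continuous_attains_sup[of "{a..b}" f] has_deriv_on_continuous_on[OF f(1)] \<open>a < b\<close>
    by auto
  define x0 where "x0 = (if xm = b then a else xm)"
  have x0: "x0 \<in> {a..b}" "x0 < b" and max0: "\<forall>y\<in>{a..b}. f y \<le> f x0"
    using xm per(1) \<open>a < b\<close> by (auto simp: x0_def)
  define x1 where "x1 = (if x0 = a then b else x0)"
  have x1: "x1 \<in> {a..b}" "a < x1" "f x1 = f x0" "f1 x1 = f1 x0"
    using x0 per \<open>a < b\<close> by (auto simp: x1_def)
  have "f1 x0 \<le> 0"
    using deriv_nonpos_at_max_right[OF has_deriv_onD[OF f(1) x0(1)]] x0 max0 by auto
  moreover have "f1 x1 \<ge> 0"
    using deriv_nonneg_at_max_left[OF has_deriv_onD[OF f(1) x1(1)]] x1 max0 by auto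
  ultimately have "f1 x0 = 0" using x1(4) by simp
  then have "f2 x0 \<le> 0"
    using second_deriv_nonpos_at_max[OF f(1) has_deriv_onD[OF f(2) x0(1)]] x0 max0 by auto
  then have "\<mu> * f x0 \<le> H" using eq h x0(1) by fastforce
  then have "f x0 \<le> H / \<mu>" using \<open>\<mu> > 0\<close> by (simp add: pos_le_divide_eq mult.commute)
  then show ?thesis using max0 \<open>x \<in> {a..b}\<close> by fastforce
qed

lemma periodic_max_principle_abs:
  assumes "a < b" and f: "has_deriv_on {a..b} f f1" "has_deriv_on {a..b} f1 f2"
    and per: "f a = f b" "f1 a = f1 b"
    and eq: "\<forall>x\<in>{a..b}. f2 x = \<mu> * f x + h x" and "\<mu> > 0" and h: "\<forall>x\<in>{a..b}. \<bar>h x\<bar> \<le> H"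
    and "x \<in> {a..b}"
  shows "\<bar>f x\<bar> \<le> H / \<mu>"
proof -
  have "f x \<le> H / \<mu>" by (rule periodic_max_principle[OF assms])
  moreover have "- f x \<le> H / \<mu>"
    using periodic_max_principle[OF \<open>a < b\<close> has_deriv_on_minus[OF f(1)] has_deriv_on_minus[OF f(2)],
        of \<mu> "\<lambda>x. - h x"] assms
    by auto
  ultimately show ?thesis by linarith
qed

text \<open>Variation of constants with the fundamental solutions \<open>exp (\<plusminus>s x)\<close>, \<open>s = sqrt \<mu>\<close>; the
  constants \<open>\<alpha>, \<beta>\<close> are the unique choice making the solution periodic, which is possible
  because \<open>exp (s (b - a)) \<noteq> 1\<close>.\<close>

lemma periodic_solution_exists:
  fixes h :: "real \<Rightarrow> real"
  assumes "a < b" "\<mu> > 0" "continuous_on {a..b} h"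
  obtains f f1 where "has_deriv_on {a..b} f f1" "has_deriv_on {a..b} f1 (\<lambda>x. \<mu> * f x + h x)"
    "f a = f b" "f1 a = f1 b"
proof -
  define s where "s = sqrt \<mu>"
  have s: "s > 0" "s * s = \<mu>" using assms(2) by (auto simp: s_def)
  define u where "u y = exp (- s * (y - a)) * h y" for y
  define v where "v y = exp (s * (y - a)) * h y" for y
  have "continuous_on {a..b} u" "continuous_on {a..b} v"
    unfolding u_def v_def by (auto intro!: continuous_intros assms(3))
  define E where "E = exp (s * (b - a))"
  have "E > 1" using s assms(1) by (simp add: E_def)
  define \<alpha> where "\<alpha> = E * integral {a..b} u / (2 * s * (1 - E))"
  define \<beta> where "\<beta> = - integral {a..b} v / (2 * s * (E - 1))"
  define P where "P x = \<alpha> + integral {a..x} u / (2 * s)" for x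
  define Q where "Q x = \<beta> - integral {a..x} v / (2 * s)" for x
  have dP: "has_deriv_on {a..b} P (\<lambda>x. u x / (2 * s))"
    and dQ: "has_deriv_on {a..b} Q (\<lambda>x. - v x / (2 * s))"
    using has_deriv_on_integral[OF \<open>continuous_on {a..b} u\<close>]
      has_deriv_on_integral[OF \<open>continuous_on {a..b} v\<close>]
    unfolding P_def[abs_def] Q_def[abs_def] using \<open>s > 0\<close>
    by (auto simp: has_deriv_on_def intro!: derivative_eq_intros)
  define f where "f x = exp (s * (x - a)) * P x + exp (- s * (x - a)) * Q x" for x
  define f1 where "f1 x = s * exp (s * (x - a)) * P x - s * exp (- s * (x - a)) * Q x" for x
  have exp_cancel: "exp (s * (x - a)) * exp (- s * (x - a)) = 1" for x
    by (simp add: exp_add[symmetric])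
  show ?thesis
  proof
    show "has_deriv_on {a..b} f f1"
      unfolding has_deriv_on_def
    proof
      fix x assume x: "x \<in> {a..b}"
      show "(f has_real_derivative f1 x) (at x within {a..b})"
        unfolding f_def
        apply (rule derivative_eq_intros has_deriv_onD[OF dP x] has_deriv_onD[OF dQ x] refl)+
        using s exp_cancel[of x] by (simp add: f1_def u_def v_def field_simps)
    qed
    show "has_deriv_on {a..b} f1 (\<lambda>x. \<mu> * f x + h x)"
      unfolding has_deriv_on_def
    proof
      fix x assume x: "x \<in> {a..b}"
      show "(f1 has_real_derivative \<mu> * f x + h x) (at x within {a..b})"
        unfolding f1_def
        apply (rule derivative_eq_intros has_deriv_onD[OF dP x] has_deriv_onD[OF dQ x] refl)+
        using s(1) exp_cancel[of x] by (simp add: f_def u_def v_def field_simps flip: s(2))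
    qed
    have "E * P b = P a" "Q b / E = Q a"
      using \<open>E > 1\<close> s(1) by (simp_all add: P_def Q_def \<alpha>_def \<beta>_def field_simps)
    moreover have "exp (s * (b - a)) = E" "exp (- s * (b - a)) = 1 / E"
      by (simp_all add: E_def exp_minus inverse_eq_divide)
    ultimately show "f a = f b" "f1 a = f1 b"
      by (simp_all add: f_def f1_def mult.assoc times_divide_eq_right[symmetric])
  qed
qed

lemma zero_mean_primitive:
  fixes F :: "real \<Rightarrow> real"
  assumes "a < b" "continuous_on {a..b} F" "integral {a..b} F = 0"
  obtains G where "has_deriv_on {a..b} G F" "G a = G b" "integral {a..b} G = 0"
proof -
  define P where "P x = integral {a..x} F" for x
  have dP: "has_deriv_on {a..b} P F" unfolding P_def[abs_def] by (rule has_deriv_on_integral[OF assms(2)])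
  define k where "k = integral {a..b} P / (b - a)"
  show ?thesis
  proof
    show "has_deriv_on {a..b} (\<lambda>x. P x - k) F"
      using dP by (auto simp: has_deriv_on_def intro!: derivative_eq_intros)
    show "P a - k = P b - k" using assms(3) by (simp add: P_def)
    have "integral {a..b} (\<lambda>x. P x - k) = integral {a..b} P - integral {a..b} (\<lambda>x. k)"
      by (intro Henstock_Kurzweil_Integration.integral_diff integrable_continuous_interval
          has_deriv_on_continuous_on[OF dP] continuous_on_const)
    also have "\<dots> = 0" using assms(1) by (simp add: k_def)
    finally show "integral {a..b} (\<lambda>x. P x - k) = 0" .
  qed
qed

lemma abs_le_supnorm:
  assumes "compact S" "continuous_on S F" "x \<in> S"
  shows "\<bar>F x\<bar> \<le> supnorm S F"
proof -
  have "bounded ((\<lambda>x. \<bar>F x\<bar>) ` S)"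
    using assms by (intro compact_imp_bounded compact_continuous_image continuous_intros)
  then show ?thesis
    unfolding supnorm_def using assms(3) by (intro cSUP_upper bounded_imp_bdd_above)
qed

lemma supnorm_le: "S \<noteq> {} \<Longrightarrow> \<forall>x\<in>S. \<bar>F x\<bar> \<le> B \<Longrightarrow> supnorm S F \<le> B"
  unfolding supnorm_def by (rule cSUP_least) auto

lemma has_integral_integral_on_interval:
  fixes F :: "real \<Rightarrow> real"
  shows "continuous_on {a..b} F \<Longrightarrow> (F has_integral integral {a..b} F) {a..b}"
  by (simp add: integrable_continuous_interval integrable_integral)

lemma integral_zero_has_root:
  fixes F :: "real \<Rightarrow> real"
  assumes "a < b" "continuous_on {a..b} F" "integral {a..b} F = 0"
  obtains \<xi> where "\<xi> \<in> {a..b}" "F \<xi> = 0"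
proof -
  have "(\<lambda>x. integral {a..x} F) a = (\<lambda>x. integral {a..x} F) b" using assms(3) by simp
  then show ?thesis
    using periodic_deriv_has_zero[OF assms(1) has_deriv_on_integral[OF assms(2)]] that by blast
qed

definition periodic_C2 :: "real \<Rightarrow> real \<Rightarrow> (real \<Rightarrow> real) \<Rightarrow> (real \<Rightarrow> real) \<Rightarrow> (real \<Rightarrow> real) \<Rightarrow> bool"
  where "periodic_C2 a b f f1 f2 \<longleftrightarrow> has_deriv_on {a..b} f f1 \<and> has_deriv_on {a..b} f1 f2 \<and>
    continuous_on {a..b} f2 \<and> f a = f b \<and> f1 a = f1 b"

text \<open>The system of \<open>is_sol\<close> with \<open>f', f'', g', g''\<close> named explicitly and the equations
  rearranged; they are required on the closed interval, to which they extend by continuity.\<close>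

definition sol_with_derivs :: "real \<Rightarrow> real \<Rightarrow> (real \<Rightarrow> real) \<Rightarrow> (real \<Rightarrow> real) \<Rightarrow>
    (real \<Rightarrow> real) \<Rightarrow> (real \<Rightarrow> real) \<Rightarrow> (real \<Rightarrow> real) \<Rightarrow>
    (real \<Rightarrow> real) \<Rightarrow> (real \<Rightarrow> real) \<Rightarrow> (real \<Rightarrow> real) \<Rightarrow> bool" where
  "sol_with_derivs m d phi vphi f f1 f2 g g1 g2 \<longleftrightarrow>
     periodic_C2 0 (2*pi) f f1 f2 \<and> periodic_C2 0 (2*pi) g g1 g2 \<and>
     (\<forall>x\<in>I2pi. f2 x + (d-m-1) * f x + (d-1) * g1 x = phi x \<and> (1-d) * f1 x - d * g2 x = vphi x) \<and>
     integral I2pi g = 0"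

lemma is_sol_imp_sol_with_derivs:
  assumes "continuous_on I2pi phi" "continuous_on I2pi vphi" "is_sol m d phi vphi f g"
  shows "sol_with_derivs m d phi vphi f (D1 I2pi f) (D2 I2pi f) g (D1 I2pi g) (D2 I2pi g)"
proof -
  let ?f1 = "D1 I2pi f" and ?f2 = "D2 I2pi f" and ?g1 = "D1 I2pi g" and ?g2 = "D2 I2pi g"
  have "0 < 2*pi" by simp
  from assms(3) have "C2_on I2pi f" "C2_on I2pi g" by (simp_all add: is_sol_def)
  note f = C2_on_intervalD[OF \<open>0 < 2*pi\<close> this(1)[unfolded I2pi_def], folded I2pi_def]
    and g = C2_on_intervalD[OF \<open>0 < 2*pi\<close> this(2)[unfolded I2pi_def], folded I2pi_def]
  have "continuous_on I2pi f" "continuous_on I2pi ?f1" "continuous_on I2pi ?g1"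
    "continuous_on I2pi ?g2"
    using f g by (auto intro: has_deriv_on_continuous_on)
  then have c1: "continuous_on I2pi (\<lambda>x. ?f2 x + (d-m-1) * f x + (d-1) * ?g1 x)"
    and c2: "continuous_on I2pi (\<lambda>x. (1-d) * ?f1 x - d * ?g2 x)"
    using f(3) by (auto intro!: continuous_intros)
  have "\<forall>x\<in>{0<..<2*pi}. ?f2 x + (d-m-1) * f x + (d-1) * ?g1 x = phi x \<and>
      (1-d) * ?f1 x - d * ?g2 x = vphi x"
    using assms(3) unfolding is_sol_def by (auto simp: algebra_simps)
  then have "?f2 x + (d-m-1) * f x + (d-1) * ?g1 x = phi x \<and> (1-d) * ?f1 x - d * ?g2 x = vphi x"
    if "x \<in> I2pi" for x
    using eq_on_interval_of_eq_on_interior[OF \<open>0 < 2*pi\<close> c1[unfolded I2pi_def]]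
      eq_on_interval_of_eq_on_interior[OF \<open>0 < 2*pi\<close> c2[unfolded I2pi_def]]
      assms(1,2) that
    by (auto simp: I2pi_def)
  then show ?thesis
    using f g assms(3) by (auto simp: sol_with_derivs_def periodic_C2_def is_sol_def I2pi_def)
qed

lemma sol_with_derivs_imp_is_sol:
  assumes "sol_with_derivs m d phi vphi f f1 f2 g g1 g2"
  shows "is_sol m d phi vphi f g"
proof -
  have "0 < 2*pi" by simp
  from assms have f: "has_deriv_on {0..2*pi} f f1" "has_deriv_on {0..2*pi} f1 f2"
      "continuous_on {0..2*pi} f2"
    and g: "has_deriv_on {0..2*pi} g g1" "has_deriv_on {0..2*pi} g1 g2"
      "continuous_on {0..2*pi} g2"
    by (simp_all add: sol_with_derivs_def periodic_C2_def)
  have "C2_on I2pi f" "C2_on I2pi g"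
    using f g unfolding C2_on_def has_deriv_on_def I2pi_def by blast+
  moreover have "D1 I2pi f x = f1 x" "D2 I2pi f x = f2 x" "D1 I2pi g x = g1 x" "D2 I2pi g x = g2 x"
    if "x \<in> I2pi" for x
    using D1_eq_on_interval[OF \<open>0 < 2*pi\<close> f(1)] D2_eq_on_interval[OF \<open>0 < 2*pi\<close> f(1,2)]
      D1_eq_on_interval[OF \<open>0 < 2*pi\<close> g(1)] D2_eq_on_interval[OF \<open>0 < 2*pi\<close> g(1,2)] that
    by (auto simp: I2pi_def)
  ultimately show ?thesis
    using assms by (auto simp: is_sol_def sol_with_derivs_def periodic_C2_def I2pi_def algebra_simps)
qed

lemma sol_with_derivs_diff:
  assumes "sol_with_derivs m d phi vphi f f1 f2 g g1 g2"
    and "sol_with_derivs m d phi vphi f' f1' f2' g' g1' g2'"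
  shows "sol_with_derivs m d (\<lambda>_. 0) (\<lambda>_. 0) (\<lambda>x. f x - f' x) (\<lambda>x. f1 x - f1' x) (\<lambda>x. f2 x - f2' x)
    (\<lambda>x. g x - g' x) (\<lambda>x. g1 x - g1' x) (\<lambda>x. g2 x - g2' x)"
proof -
  have "continuous_on I2pi g" "continuous_on I2pi g'"
    using assms by (auto simp: sol_with_derivs_def periodic_C2_def I2pi_def
        intro: has_deriv_on_continuous_on)
  then have "integral I2pi (\<lambda>x. g x - g' x) = integral I2pi g - integral I2pi g'"
    by (simp add: I2pi_def integrable_continuous_interval Henstock_Kurzweil_Integration.integral_diff)
  moreover have "(f2 x - f2' x) + (d-m-1) * (f x - f' x) + (d-1) * (g1 x - g1' x) = 0 \<and>
      (1-d) * (f1 x - f1' x) - d * (g2 x - g2' x) = 0" if "x \<in> I2pi" for x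
  proof -
    from assms that have "f2 x + (d-m-1) * f x + (d-1) * g1 x = phi x"
      "f2' x + (d-m-1) * f' x + (d-1) * g1' x = phi x"
      "(1-d) * f1 x - d * g2 x = vphi x" "(1-d) * f1' x - d * g2' x = vphi x"
      by (auto simp: sol_with_derivs_def)
    moreover have "(f2 x - f2' x) + (d-m-1) * (f x - f' x) + (d-1) * (g1 x - g1' x) =
        (f2 x + (d-m-1) * f x + (d-1) * g1 x) - (f2' x + (d-m-1) * f' x + (d-1) * g1' x)"
      "(1-d) * (f1 x - f1' x) - d * (g2 x - g2' x) =
        ((1-d) * f1 x - d * g2 x) - ((1-d) * f1' x - d * g2' x)"
      by (simp_all add: algebra_simps)
    ultimately show ?thesis by simp
  qed
  ultimately show ?thesis
    using assms unfolding sol_with_derivs_def periodic_C2_def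
    by (auto intro!: has_deriv_on_diff continuous_intros)
qed

definition first_integral_const :: "real \<Rightarrow> real \<Rightarrow> (real \<Rightarrow> real) \<Rightarrow> (real \<Rightarrow> real) \<Rightarrow> real" where
  "first_integral_const m d phi vphi =
     ((d-1)/(d-m-1) * integral I2pi phi + integral I2pi (\<lambda>x. integral {0..x} vphi)) / (2*pi)"

definition f_forcing :: "real \<Rightarrow> real \<Rightarrow> (real \<Rightarrow> real) \<Rightarrow> (real \<Rightarrow> real) \<Rightarrow> real \<Rightarrow> real" where
  "f_forcing m d phi vphi x =
     phi x - (d-1)/d * (first_integral_const m d phi vphi - integral {0..x} vphi)"

text \<open>The constant is found by integrating the first integral and the first equation over a
  period, using \<open>\<integral> f'' = \<integral> g' = 0\<close>.\<close>

lemma sol_with_derivs_first_integral: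
  assumes "d \<noteq> m + 1" "continuous_on I2pi vphi"
    and sol: "sol_with_derivs m d phi vphi f f1 f2 g g1 g2" and "x \<in> I2pi"
  shows "d * g1 x + (d-1) * f x + integral {0..x} vphi = first_integral_const m d phi vphi"
proof -
  define V where "V x = integral {0..x} vphi" for x
  from sol have f: "has_deriv_on I2pi f f1" "has_deriv_on I2pi f1 f2" "f1 0 = f1 (2*pi)"
    and g: "has_deriv_on I2pi g g1" "has_deriv_on I2pi g1 g2" "g 0 = g (2*pi)"
    and eq: "\<forall>x\<in>I2pi. f2 x + (d-m-1) * f x + (d-1) * g1 x = phi x \<and> (1-d) * f1 x - d * g2 x = vphi x"
    by (simp_all add: sol_with_derivs_def periodic_C2_def I2pi_def)
  have V: "has_deriv_on I2pi V vphi"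
    unfolding V_def[abs_def] I2pi_def by (rule has_deriv_on_integral[OF assms(2)[unfolded I2pi_def]])
  have "\<exists>c. \<forall>x\<in>I2pi. d * g1 x + (d-1) * f x + V x = c"
  proof (rule has_field_derivative_zero_constant)
    show "convex I2pi" by (simp add: I2pi_def)
    fix x assume "x \<in> I2pi"
    then have "((\<lambda>x. d * g1 x + (d-1) * f x + V x) has_real_derivative d * g2 x + (d-1) * f1 x + vphi x)
        (at x within I2pi)"
      using f g V by (auto simp: has_deriv_on_def intro!: derivative_eq_intros)
    moreover have "d * g2 x + (d-1) * f1 x + vphi x = 0" using eq \<open>x \<in> I2pi\<close> by (auto simp: algebra_simps)
    ultimately show "((\<lambda>x. d * g1 x + (d-1) * f x + V x) has_real_derivative 0) (at x within I2pi)"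
      by simp
  qed
  then obtain c where c: "\<forall>x\<in>I2pi. d * g1 x + (d-1) * f x + V x = c" by blast
  have i_f2: "(f2 has_integral 0) I2pi" and i_g1: "(g1 has_integral 0) I2pi"
    using periodic_deriv_has_integral_zero[of 0 "2*pi"] f g by (simp_all add: I2pi_def)
  have i_f: "(f has_integral integral I2pi f) I2pi" and i_V: "(V has_integral integral I2pi V) I2pi"
    using f(1) V by (auto simp: I2pi_def intro!: has_integral_integral_on_interval has_deriv_on_continuous_on)
  have "((\<lambda>x. f2 x + (d-m-1) * f x + (d-1) * g1 x) has_integral
      0 + (d-m-1) * integral I2pi f + (d-1) * 0) I2pi"
    by (intro has_integral_add has_integral_mult_right i_f2 i_f i_g1)
  then have "(phi has_integral 0 + (d-m-1) * integral I2pi f + (d-1) * 0) I2pi"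
    by (rule has_integral_eq[rotated]) (use eq in simp)
  then have int_phi: "integral I2pi phi = (d-m-1) * integral I2pi f" by (simp add: integral_unique)
  have "((\<lambda>x. d * g1 x + (d-1) * f x + V x) has_integral
      d * 0 + (d-1) * integral I2pi f + integral I2pi V) I2pi"
    by (intro has_integral_add has_integral_mult_right i_g1 i_f i_V)
  then have "((\<lambda>x. c) has_integral d * 0 + (d-1) * integral I2pi f + integral I2pi V) I2pi"
    by (rule has_integral_eq[rotated]) (use c in simp)
  then have "integral I2pi (\<lambda>x. c) = (d-1) * integral I2pi f + integral I2pi V"
    by (simp add: integral_unique)
  moreover have "integral I2pi (\<lambda>x. c) = 2*pi*c" by (simp add: I2pi_def)
  moreover have "(d-1)/(d-m-1) * integral I2pi phi = (d-1) * integral I2pi f"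
    using assms(1) int_phi by simp
  ultimately have "c = first_integral_const m d phi vphi"
    by (simp add: first_integral_const_def V_def[abs_def] eq_divide_eq mult.commute)
  then show ?thesis using c \<open>x \<in> I2pi\<close> by (simp add: V_def)
qed

lemma sol_with_derivs_f_equation:
  assumes "d \<noteq> 0" "d \<noteq> m + 1" "continuous_on I2pi vphi"
    and sol: "sol_with_derivs m d phi vphi f f1 f2 g g1 g2" and "x \<in> I2pi"
  shows "f2 x = (m - 1 + 1/d) * f x + f_forcing m d phi vphi x"
proof -
  let ?c = "first_integral_const m d phi vphi" and ?V = "integral {0..x} vphi"
  have "d * g1 x + (d-1) * f x + ?V = ?c"
    by (rule sol_with_derivs_first_integral[OF assms(2,3) sol assms(5)])
  then have g1: "g1 x = (?c - (d-1) * f x - ?V) / d" using assms(1) by (simp add: field_simps)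
  have "f2 x = phi x - (d-m-1) * f x - (d-1) * g1 x"
    using sol assms(5) unfolding sol_with_derivs_def by (simp add: algebra_simps)
  also have "\<dots> = (m - 1 + 1/d) * f x + f_forcing m d phi vphi x"
    unfolding g1 f_forcing_def using assms(1) by (simp add: field_simps)
  finally show ?thesis .
qed

lemma first_integral_const_bound:
  assumes "m > 1" "d \<ge> m + 2" "continuous_on I2pi phi" "continuous_on I2pi vphi"
    and bP: "\<forall>x\<in>I2pi. \<bar>phi x\<bar> \<le> P" and bQ: "\<forall>x\<in>I2pi. \<bar>vphi x\<bar> \<le> Q"
  shows "\<bar>first_integral_const m d phi vphi\<bar> \<le> (m+1)*P + 2*pi*Q"
proof -
  define V where "V x = integral {0..x} vphi" for x
  have "has_deriv_on {0..2*pi} V vphi"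
    unfolding V_def[abs_def] using assms(4) by (simp add: I2pi_def has_deriv_on_integral)
  then have cV: "continuous_on {0..2*pi} V" by (rule has_deriv_on_continuous_on)
  have bV: "\<forall>x\<in>{0..2*pi}. \<bar>V x\<bar> \<le> 2*pi*Q"
    using abs_integral_upper_le[of 0 "2*pi" vphi Q] assms(4) bQ by (auto simp: I2pi_def V_def)
  have "\<bar>integral I2pi phi\<bar> \<le> 2*pi*P" "\<bar>integral I2pi V\<bar> \<le> 2*pi*(2*pi*Q)"
    using abs_integral_upper_le[of 0 "2*pi" phi P "2*pi"] abs_integral_upper_le[OF cV bV, of "2*pi"]
      assms(3) bP by (simp_all add: I2pi_def)
  moreover have "m * (m + 2) \<le> m * d" using assms(1,2) by (intro mult_left_mono) auto
  then have "0 \<le> (d-1)/(d-m-1)" "(d-1)/(d-m-1) \<le> m+1"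
    using assms(1,2) by (simp_all add: divide_le_eq algebra_simps)
  ultimately have "\<bar>(d-1)/(d-m-1) * integral I2pi phi\<bar> \<le> (m+1) * (2*pi*P)"
    unfolding abs_mult by (intro mult_mono) (auto simp del: abs_divide)
  then have "\<bar>(d-1)/(d-m-1) * integral I2pi phi + integral I2pi V\<bar> \<le> 2*pi*((m+1)*P + 2*pi*Q)"
    using \<open>\<bar>integral I2pi V\<bar> \<le> _\<close> abs_triangle_ineq[of "(d-1)/(d-m-1) * integral I2pi phi"]
    by (simp only: algebra_simps)
  then show ?thesis by (simp add: first_integral_const_def V_def[abs_def] abs_divide divide_le_eq mult.commute)
qed

lemma f_forcing_bound:
  assumes "m > 1" "d \<ge> m + 2" "continuous_on I2pi phi" "continuous_on I2pi vphi"
    and bP: "\<forall>x\<in>I2pi. \<bar>phi x\<bar> \<le> P" and bQ: "\<forall>x\<in>I2pi. \<bar>vphi x\<bar> \<le> Q" and "x \<in> I2pi"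
  shows "\<bar>f_forcing m d phi vphi x\<bar> \<le> (m+2)*P + 4*pi*Q"
proof -
  let ?c = "first_integral_const m d phi vphi" and ?V = "integral {0..x} vphi"
  have "\<bar>?c\<bar> \<le> (m+1)*P + 2*pi*Q" by (rule first_integral_const_bound[OF assms(1-6)])
  moreover have "\<bar>?V\<bar> \<le> 2*pi*Q"
    using abs_integral_upper_le[of 0 "2*pi" vphi Q x] assms(4,7) bQ by (simp add: I2pi_def)
  ultimately have "\<bar>?c - ?V\<bar> \<le> (m+1)*P + 4*pi*Q" by linarith
  moreover have "\<bar>(d-1)/d * (?c - ?V)\<bar> \<le> \<bar>?c - ?V\<bar>"
    unfolding abs_mult using assms(1,2) by (intro mult_left_le_one_le) auto
  ultimately have scaled: "\<bar>(d-1)/d * (?c - ?V)\<bar> \<le> (m+1)*P + 4*pi*Q" by linarith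
  have "\<bar>f_forcing m d phi vphi x\<bar> \<le> \<bar>phi x\<bar> + \<bar>(d-1)/d * (?c - ?V)\<bar>"
    unfolding f_forcing_def by (rule abs_triangle_ineq4)
  also have "\<dots> \<le> P + ((m+1)*P + 4*pi*Q)"
    using bP \<open>x \<in> I2pi\<close> scaled by (intro add_mono) auto
  also have "\<dots> = (m+2)*P + 4*pi*Q" by (simp add: algebra_simps)
  finally show ?thesis .
qed

lemma sol_with_derivs_f_bounds:
  assumes "m > 1" "d \<ge> m + 2" "continuous_on I2pi phi" "continuous_on I2pi vphi"
    and sol: "sol_with_derivs m d phi vphi f f1 f2 g g1 g2"
    and bP: "\<forall>x\<in>I2pi. \<bar>phi x\<bar> \<le> P" and bQ: "\<forall>x\<in>I2pi. \<bar>vphi x\<bar> \<le> Q"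
  defines "H \<equiv> (m+2)*P + 4*pi*Q"
  shows "\<forall>x\<in>I2pi. \<bar>f x\<bar> \<le> H/(m-1) \<and> \<bar>f1 x\<bar> \<le> 4*pi*H \<and> \<bar>f2 x\<bar> \<le> 2*H"
proof -
  define \<mu> where "\<mu> = m - 1 + 1/d"
  have "1/d > 0" using assms(1,2) by simp
  then have "\<mu> \<ge> m - 1" "\<mu> > 0" using assms(1) unfolding \<mu>_def by linarith+
  from sol have f: "has_deriv_on {0..2*pi} f f1" "has_deriv_on {0..2*pi} f1 f2"
    "f 0 = f (2*pi)" "f1 0 = f1 (2*pi)"
    by (simp_all add: sol_with_derivs_def periodic_C2_def)
  have "d \<noteq> 0" "d \<noteq> m + 1" using assms(1,2) by auto
  then have eq: "\<forall>x\<in>{0..2*pi}. f2 x = \<mu> * f x + f_forcing m d phi vphi x"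
    using sol_with_derivs_f_equation[OF _ _ assms(4) sol] by (simp add: \<mu>_def I2pi_def)
  have h: "\<forall>x\<in>{0..2*pi}. \<bar>f_forcing m d phi vphi x\<bar> \<le> H"
    using f_forcing_bound[OF assms(1-4) bP bQ] by (simp add: H_def I2pi_def)
  have bf: "\<bar>f x\<bar> \<le> H/\<mu>" if "x \<in> {0..2*pi}" for x
    by (rule periodic_max_principle_abs[OF _ f eq \<open>\<mu> > 0\<close> h that]) simp
  have "0 \<in> {0..2*pi::real}" by simp
  then have "H \<ge> 0" using h abs_ge_zero order.trans by metis
  then have "H/\<mu> \<le> H/(m-1)" using \<open>\<mu> \<ge> m - 1\<close> assms(1) by (intro divide_left_mono) auto
  have bf2: "\<bar>f2 x\<bar> \<le> 2*H" if "x \<in> {0..2*pi}" for x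
  proof -
    have "\<bar>\<mu> * f x\<bar> \<le> H" using bf[OF that] \<open>\<mu> > 0\<close> by (simp add: abs_mult field_simps)
    moreover have "f2 x = \<mu> * f x + f_forcing m d phi vphi x" using eq that by blast
    moreover have "\<bar>f_forcing m d phi vphi x\<bar> \<le> H" using h that by blast
    ultimately show ?thesis using abs_triangle_ineq[of "\<mu> * f x" "f_forcing m d phi vphi x"] by linarith
  qed
  have "0 < 2*pi" by simp
  obtain \<xi> where "\<xi> \<in> {0..2*pi}" "f1 \<xi> = 0" by (rule periodic_deriv_has_zero[OF \<open>0 < 2*pi\<close> f(1,3)])
  then have bf1: "\<bar>f1 x\<bar> \<le> 4*pi*H" if "x \<in> {0..2*pi}" for x
    using abs_diff_le_of_deriv_bound[OF f(2) _ that, of "2*H" \<xi>] bf2 by simp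
  show ?thesis unfolding I2pi_def
  proof (intro ballI conjI)
    fix x assume x: "x \<in> {0..2*pi}"
    show "\<bar>f x\<bar> \<le> H/(m-1)" using bf[OF x] \<open>H/\<mu> \<le> H/(m-1)\<close> by linarith
    show "\<bar>f1 x\<bar> \<le> 4*pi*H" by (rule bf1[OF x])
    show "\<bar>f2 x\<bar> \<le> 2*H" by (rule bf2[OF x])
  qed
qed

lemma sol_with_derivs_g_bounds:
  assumes "m > 1" "d \<ge> m + 2" "continuous_on I2pi phi" "continuous_on I2pi vphi"
    and sol: "sol_with_derivs m d phi vphi f f1 f2 g g1 g2"
    and bP: "\<forall>x\<in>I2pi. \<bar>phi x\<bar> \<le> P" and bQ: "\<forall>x\<in>I2pi. \<bar>vphi x\<bar> \<le> Q"
  defines "H \<equiv> (m+2)*P + 4*pi*Q"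
  shows "\<forall>x\<in>I2pi. \<bar>g x\<bar> \<le> 2*pi*(H + H/(m-1)) \<and> \<bar>g1 x\<bar> \<le> H + H/(m-1) \<and> \<bar>g2 x\<bar> \<le> 4*pi*H + Q"
proof -
  let ?c = "first_integral_const m d phi vphi"
  have fb: "\<forall>x\<in>I2pi. \<bar>f x\<bar> \<le> H/(m-1) \<and> \<bar>f1 x\<bar> \<le> 4*pi*H"
    using sol_with_derivs_f_bounds[OF assms(1-4) sol bP bQ] by (simp add: H_def)
  from sol have g: "has_deriv_on {0..2*pi} g g1" "integral {0..2*pi} g = 0"
    by (simp_all add: sol_with_derivs_def periodic_C2_def I2pi_def)
  have "d > 0" "d \<noteq> m + 1" using assms(1,2) by auto
  have "0 \<in> I2pi" by (simp add: I2pi_def)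
  then have "P \<ge> 0" "Q \<ge> 0" using bP bQ abs_ge_zero order.trans by metis+
  then have "(m+1)*P + 4*pi*Q \<le> H" "H \<ge> 0" using assms(1) by (simp_all add: H_def algebra_simps)
  then have "(m+1)*P + 4*pi*Q \<le> d * H" "Q \<le> d * Q"
    using assms(1,2) mult_right_mono[of 1 d H] mult_right_mono[of 1 d Q] \<open>Q \<ge> 0\<close> by auto
  have bg1: "\<bar>g1 x\<bar> \<le> H + H/(m-1)" if "x \<in> I2pi" for x
  proof -
    let ?V = "integral {0..x} vphi"
    have "\<bar>?c\<bar> \<le> (m+1)*P + 2*pi*Q" by (rule first_integral_const_bound[OF assms(1-4) bP bQ])
    moreover have "\<bar>?V\<bar> \<le> 2*pi*Q"
      using abs_integral_upper_le[of 0 "2*pi" vphi Q x] assms(4) bQ that by (simp add: I2pi_def)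
    moreover have "\<bar>(d-1) * f x\<bar> \<le> d * (H/(m-1))"
      unfolding abs_mult using fb that \<open>d > 0\<close> assms(1,2) by (intro mult_mono) auto
    moreover have "d * g1 x = ?c - (d-1) * f x - ?V"
      using sol_with_derivs_first_integral[OF \<open>d \<noteq> m + 1\<close> assms(4) sol that] by simp
    then have "d * \<bar>g1 x\<bar> = \<bar>?c - (d-1) * f x - ?V\<bar>"
      using \<open>d > 0\<close> by (metis abs_mult abs_of_pos)
    moreover have "\<bar>?c - (d-1) * f x - ?V\<bar> \<le> \<bar>?c\<bar> + \<bar>(d-1) * f x\<bar> + \<bar>?V\<bar>"
      using abs_triangle_ineq4[of "?c - (d-1) * f x" ?V] abs_triangle_ineq4[of ?c "(d-1) * f x"]
      by linarith
    ultimately have "d * \<bar>g1 x\<bar> \<le> d * H + d * (H/(m-1))"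
      using \<open>(m+1)*P + 4*pi*Q \<le> d * H\<close> by linarith
    then show ?thesis using \<open>d > 0\<close> by (metis distrib_left mult_le_cancel_left_pos)
  qed
  have bg2: "\<bar>g2 x\<bar> \<le> 4*pi*H + Q" if "x \<in> I2pi" for x
  proof -
    have "d * g2 x = - ((d-1) * f1 x + vphi x)"
      using sol that by (simp add: sol_with_derivs_def algebra_simps)
    then have "d * \<bar>g2 x\<bar> = \<bar>(d-1) * f1 x + vphi x\<bar>"
      using \<open>d > 0\<close> by (metis abs_minus_cancel abs_mult abs_of_pos)
    also have "\<dots> \<le> \<bar>(d-1) * f1 x\<bar> + \<bar>vphi x\<bar>" by (rule abs_triangle_ineq)
    also have "\<dots> \<le> d * (4*pi*H) + d * Q"
    proof -
      have "\<bar>(d-1) * f1 x\<bar> \<le> d * (4*pi*H)"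
        unfolding abs_mult using fb that \<open>d > 0\<close> assms(1,2) by (intro mult_mono) auto
      moreover have "\<bar>vphi x\<bar> \<le> Q" using bQ that by blast
      ultimately show ?thesis using \<open>Q \<le> d * Q\<close> by linarith
    qed
    finally show ?thesis using \<open>d > 0\<close> by (simp add: distrib_left[symmetric])
  qed
  have "0 < 2*pi" by simp
  obtain \<eta> where "\<eta> \<in> {0..2*pi}" "g \<eta> = 0"
    by (rule integral_zero_has_root[OF \<open>0 < 2*pi\<close> has_deriv_on_continuous_on[OF g(1)] g(2)])
  then have "\<bar>g x\<bar> \<le> 2*pi*(H + H/(m-1))" if "x \<in> I2pi" for x
    using abs_diff_le_of_deriv_bound[OF g(1) _ _, of "H + H/(m-1)" x \<eta>] bg1 that by (simp add: I2pi_def)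
  then show ?thesis using bg1 bg2 by blast
qed

text \<open>For the periodic solution of \<open>f'' = \<mu> f + h\<close> the choice of the constant in \<open>h\<close> forces
  \<open>(d-m-1) \<integral> f = \<integral> phi\<close>, which is what the first equation requires once \<open>\<integral> g' = 0\<close>.\<close>

lemma forced_periodic_solution_mean:
  assumes "m > 1" "d > m + 1" "continuous_on I2pi phi" "continuous_on I2pi vphi"
    and f: "has_deriv_on {0..2*pi} f f1"
      "has_deriv_on {0..2*pi} f1 (\<lambda>x. (m - 1 + 1/d) * f x + f_forcing m d phi vphi x)"
      "f1 0 = f1 (2*pi)"
  shows "(d-m-1) * integral I2pi f = integral I2pi phi"
proof -
  define c where "c = first_integral_const m d phi vphi"
  define V where "V x = integral {0..x} vphi" for x
  define \<mu> where "\<mu> = m - 1 + 1/d"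
  let ?A = "integral {0..2*pi} f" and ?B = "integral {0..2*pi} phi" and ?W = "integral {0..2*pi} V"
  have "d > 0" "1/d > 0" using assms(1,2) by simp_all
  then have "\<mu> > 0" using assms(1) unfolding \<mu>_def by linarith
  have cV: "continuous_on {0..2*pi} V"
    unfolding V_def[abs_def] using assms(4)
    by (intro has_deriv_on_continuous_on[OF has_deriv_on_integral]) (simp add: I2pi_def)
  have h: "f_forcing m d phi vphi = (\<lambda>x. phi x - (d-1)/d * (c - V x))"
    by (simp add: f_forcing_def[abs_def] c_def V_def)
  have i_f: "(f has_integral ?A) {0..2*pi}"
    and i_phi: "(phi has_integral ?B) {0..2*pi}"
    and i_V: "(V has_integral ?W) {0..2*pi}"
    using has_deriv_on_continuous_on[OF f(1)] assms(3) cV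
    by (simp_all add: has_integral_integral_on_interval I2pi_def)
  have i_c: "((\<lambda>x. c) has_integral 2*pi*c) {0..2*pi}"
    using has_integral_const_real[of c 0 "2*pi"] by simp
  have "((\<lambda>x. \<mu> * f x + f_forcing m d phi vphi x) has_integral
      \<mu> * ?A + (?B - (d-1)/d * (2*pi*c - ?W))) {0..2*pi}"
    unfolding h by (intro has_integral_add has_integral_diff has_integral_mult_right i_f i_phi i_c i_V)
  moreover have "((\<lambda>x. \<mu> * f x + f_forcing m d phi vphi x) has_integral 0) {0..2*pi}"
    by (rule periodic_deriv_has_integral_zero[OF _ f(2)[folded \<mu>_def] f(3)]) simp
  ultimately have int_f2: "\<mu> * ?A + (?B - (d-1)/d * (2*pi*c - ?W)) = 0"
    using has_integral_unique by blast
  define J where "J = ?B/(d-m-1)"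
  have "d \<noteq> 0" "d - m - 1 \<noteq> 0" using assms(2) \<open>d > 0\<close> by auto
  then have B: "?B = (d-m-1) * J" by (simp add: J_def)
  have int_c: "2*pi*c - ?W = (d-1) * J"
    by (simp add: c_def first_integral_const_def V_def[abs_def] I2pi_def J_def)
  have "(d-1)/d * ((d-1) * J) - (d-m-1) * J = \<mu> * J"
    using \<open>d \<noteq> 0\<close> by (simp add: \<mu>_def field_simps)
  then have "\<mu> * ?A = \<mu> * J" using int_f2 unfolding int_c B by linarith
  then show ?thesis using \<open>\<mu> > 0\<close> B by (simp add: I2pi_def)
qed

lemma sol_with_derivs_exists:
  assumes "m > 1" "d > m + 1" "continuous_on I2pi phi" "continuous_on I2pi vphi"
    and "integral I2pi vphi = 0"
  obtains f f1 f2 g g1 g2 where "sol_with_derivs m d phi vphi f f1 f2 g g1 g2"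
proof -
  define c where "c = first_integral_const m d phi vphi"
  define V where "V x = integral {0..x} vphi" for x
  define \<mu> where "\<mu> = m - 1 + 1/d"
  have "d > 0" "1/d > 0" using assms(1,2) by simp_all
  then have "\<mu> > 0" using assms(1) unfolding \<mu>_def by linarith
  have "0 < 2*pi" by simp
  have cphi: "continuous_on {0..2*pi} phi" and cvphi: "continuous_on {0..2*pi} vphi"
    using assms(3,4) by (simp_all add: I2pi_def)
  have dV: "has_deriv_on {0..2*pi} V vphi"
    unfolding V_def[abs_def] by (rule has_deriv_on_integral[OF cvphi])
  have cV: "continuous_on {0..2*pi} V" by (rule has_deriv_on_continuous_on[OF dV])
  have h: "f_forcing m d phi vphi = (\<lambda>x. phi x - (d-1)/d * (c - V x))"
    by (simp add: f_forcing_def[abs_def] c_def V_def)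
  have ch: "continuous_on {0..2*pi} (f_forcing m d phi vphi)"
    unfolding h by (intro continuous_intros cphi cV)
  obtain f f1 where f: "has_deriv_on {0..2*pi} f f1"
      "has_deriv_on {0..2*pi} f1 (\<lambda>x. \<mu> * f x + f_forcing m d phi vphi x)"
      "f 0 = f (2*pi)" "f1 0 = f1 (2*pi)"
    by (rule periodic_solution_exists[OF \<open>0 < 2*pi\<close> \<open>\<mu> > 0\<close> ch])
  define f2 where "f2 x = \<mu> * f x + f_forcing m d phi vphi x" for x
  define g1 where "g1 x = (c - (d-1) * f x - V x) / d" for x
  define g2 where "g2 x = - ((d-1) * f1 x + vphi x) / d" for x
  have df1: "has_deriv_on {0..2*pi} f1 f2" using f(2) by (simp add: f2_def[abs_def])
  have cf: "continuous_on {0..2*pi} f" "continuous_on {0..2*pi} f1"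
    using f(1) df1 by (simp_all add: has_deriv_on_continuous_on)
  have cf2: "continuous_on {0..2*pi} f2"
    unfolding f2_def[abs_def] by (intro continuous_intros cf ch)
  have dg1: "has_deriv_on {0..2*pi} g1 g2"
    using f(1) dV \<open>d > 0\<close> unfolding has_deriv_on_def g1_def[abs_def] g2_def[abs_def]
    by (auto intro!: derivative_eq_intros)
  have cg1: "continuous_on {0..2*pi} g1" by (rule has_deriv_on_continuous_on[OF dg1])
  have cg2: "continuous_on {0..2*pi} g2"
    unfolding g2_def[abs_def] using \<open>d > 0\<close> by (auto intro!: continuous_intros cf cvphi)
  let ?A = "integral {0..2*pi} f" and ?W = "integral {0..2*pi} V"
  have "(d-m-1) * ?A = integral {0..2*pi} phi"
    using forced_periodic_solution_mean[OF assms(1-4) f(1) f(2)[unfolded \<mu>_def] f(4)]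
    by (simp add: I2pi_def)
  then have "?A = integral {0..2*pi} phi / (d-m-1)"
    using assms(2) by (simp add: eq_divide_eq mult.commute)
  then have "2*pi*c - (d-1) * ?A - ?W = 0"
    by (simp add: c_def first_integral_const_def V_def[abs_def] I2pi_def)
  moreover have "(g1 has_integral (2*pi*c - (d-1) * ?A - ?W) / d) {0..2*pi}"
    using has_integral_const_real[of c 0 "2*pi"] cf(1) cV
    unfolding g1_def[abs_def] divide_inverse
    by (intro has_integral_mult_left has_integral_diff has_integral_mult_right
        has_integral_integral_on_interval) simp_all
  ultimately have "integral {0..2*pi} g1 = 0" by (simp add: integral_unique)
  then obtain g where g: "has_deriv_on {0..2*pi} g g1" "g 0 = g (2*pi)" "integral {0..2*pi} g = 0"
    by (rule zero_mean_primitive[OF \<open>0 < 2*pi\<close> cg1])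
  have "V 0 = V (2*pi)" using assms(5) by (simp add: V_def I2pi_def)
  then have "g1 0 = g1 (2*pi)" using f(3) by (simp add: g1_def)
  moreover have "f2 x + (d-m-1) * f x + (d-1) * g1 x = phi x" "(1-d) * f1 x - d * g2 x = vphi x" for x
    using \<open>d > 0\<close> by (simp_all add: f2_def h g1_def g2_def \<mu>_def field_simps)
  ultimately have "sol_with_derivs m d phi vphi f f1 f2 g g1 g2"
    using f(1,3,4) df1 cf2 g dg1 cg2
    by (simp add: sol_with_derivs_def periodic_C2_def I2pi_def)
  then show ?thesis by (rule that)
qed

lemma sol_with_derivs_zero_data:
  assumes "m > 1" "d \<ge> m + 2" and sol: "sol_with_derivs m d (\<lambda>_. 0) (\<lambda>_. 0) f f1 f2 g g1 g2"
    and "x \<in> I2pi"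
  shows "f x = 0" "g x = 0"
  using sol_with_derivs_f_bounds[OF assms(1,2) _ _ sol, of 0 0]
    sol_with_derivs_g_bounds[OF assms(1,2) _ _ sol, of 0 0] \<open>x \<in> I2pi\<close>
  by auto

lemma is_sol_unique:
  assumes "m > 1" "d \<ge> m + 2" "continuous_on I2pi phi" "continuous_on I2pi vphi"
    and "is_sol m d phi vphi f g" "is_sol m d phi vphi f' g'" "x \<in> I2pi"
  shows "f x = f' x" "g x = g' x"
proof -
  note diff = sol_with_derivs_diff[OF is_sol_imp_sol_with_derivs[OF assms(3,4,5)]
      is_sol_imp_sol_with_derivs[OF assms(3,4,6)]]
  show "f x = f' x" "g x = g' x" using sol_with_derivs_zero_data[OF assms(1,2) diff assms(7)] by simp_all
qed

lemma is_sol_exists: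
  assumes "m > 1" "d \<ge> m + 2" "continuous_on I2pi phi" "continuous_on I2pi vphi"
    and "integral I2pi vphi = 0"
  shows "\<exists>f g. is_sol m d phi vphi f g"
proof -
  have "d > m + 1" using assms(2) by simp
  then obtain f f1 f2 g g1 g2 where "sol_with_derivs m d phi vphi f f1 f2 g g1 g2"
    using sol_with_derivs_exists[OF assms(1) _ assms(3-5)] by blast
  then show ?thesis using sol_with_derivs_imp_is_sol by blast
qed

lemma is_sol_C2_estimate:
  assumes "m > 1" "d \<ge> m + 2" "continuous_on I2pi phi" "continuous_on I2pi vphi"
    and sol: "is_sol m d phi vphi f g"
  defines "K \<equiv> m + 2 + 4*pi"
  shows "C2norm I2pi f + C2norm I2pi g \<le>
    K * ((2 + 2*pi)/(m-1) + 10*pi + 4) * (supnorm I2pi phi + supnorm I2pi vphi)"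
proof -
  define P where "P = supnorm I2pi phi"
  define Q where "Q = supnorm I2pi vphi"
  define H where "H = (m+2)*P + 4*pi*Q"
  have "compact I2pi" "I2pi \<noteq> {}" by (simp_all add: I2pi_def)
  have bP: "\<forall>x\<in>I2pi. \<bar>phi x\<bar> \<le> P" and bQ: "\<forall>x\<in>I2pi. \<bar>vphi x\<bar> \<le> Q"
    unfolding P_def Q_def using abs_le_supnorm[OF \<open>compact I2pi\<close>] assms(3,4) by blast+
  have "0 \<in> I2pi" by (simp add: I2pi_def)
  then have "P \<ge> 0" "Q \<ge> 0" using bP bQ abs_ge_zero order.trans by metis+
  note s = is_sol_imp_sol_with_derivs[OF assms(3,4) sol]
  note fb = sol_with_derivs_f_bounds[OF assms(1-4) s bP bQ, folded H_def]
    and gb = sol_with_derivs_g_bounds[OF assms(1-4) s bP bQ, folded H_def]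
  have "supnorm I2pi f \<le> H/(m-1)" "supnorm I2pi (D1 I2pi f) \<le> 4*pi*H"
    "supnorm I2pi (D2 I2pi f) \<le> 2*H" "supnorm I2pi g \<le> 2*pi*(H + H/(m-1))"
    "supnorm I2pi (D1 I2pi g) \<le> H + H/(m-1)" "supnorm I2pi (D2 I2pi g) \<le> 4*pi*H + Q"
    using fb gb by (auto intro!: supnorm_le[OF \<open>I2pi \<noteq> {}\<close>])
  then have "C2norm I2pi f + C2norm I2pi g \<le>
      H/(m-1) + 4*pi*H + 2*H + (2*pi*(H + H/(m-1)) + (H + H/(m-1)) + (4*pi*H + Q))"
    unfolding C2norm_def by linarith
  also have "\<dots> = (2 + 2*pi) * (H/(m-1)) + (10*pi + 3) * H + Q" by (simp add: algebra_simps)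
  also have "\<dots> \<le> (2 + 2*pi) * (K * (P + Q) / (m-1)) + (10*pi + 3) * (K * (P + Q)) + K * (P + Q)"
  proof -
    have "H \<le> K * (P + Q)" "Q \<le> K * (P + Q)"
      using \<open>P \<ge> 0\<close> \<open>Q \<ge> 0\<close> assms(1) by (simp_all add: H_def K_def algebra_simps)
    moreover from this(1) have "H/(m-1) \<le> K * (P + Q) / (m-1)"
      using assms(1) by (simp add: divide_right_mono)
    ultimately show ?thesis by (intro add_mono mult_left_mono) auto
  qed
  also have "\<dots> = K * ((2 + 2*pi)/(m-1) + 10*pi + 4) * (P + Q)" by (simp add: algebra_simps)
  finally show ?thesis by (simp add: P_def Q_def)
qed

theorem lemmaA3:
  fixes m :: real
  assumes "m > 1"
  shows "\<exists>D0 > 0. \<exists>C > 0. \<forall>dh \<ge> D0. \<forall>phi vphi :: real \<Rightarrow> real.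
    continuous_on UNIV phi \<and> continuous_on UNIV vphi \<and>
    (\<forall>x. phi (x + 2*pi) = phi x) \<and> (\<forall>x. vphi (x + 2*pi) = vphi x) \<and>
    integral I2pi vphi = 0 \<longrightarrow>
      (\<exists>f g. is_sol m dh phi vphi f g) \<and>
      (\<forall>f1 g1 f2 g2. is_sol m dh phi vphi f1 g1 \<and> is_sol m dh phi vphi f2 g2 \<longrightarrow>
          (\<forall>x\<in>I2pi. f1 x = f2 x \<and> g1 x = g2 x)) \<and>
      (\<forall>f g. is_sol m dh phi vphi f g \<longrightarrow>
          C2norm I2pi f + C2norm I2pi g \<le> C * (supnorm I2pi phi + supnorm I2pi vphi))"
proof -
  define C where "C = (m + 2 + 4*pi) * ((2 + 2*pi)/(m-1) + 10*pi + 4)"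
  have "C > 0" unfolding C_def using assms by (intro mult_pos_pos add_pos_pos divide_pos_pos) auto
  have restrict: "continuous_on I2pi F" if "continuous_on UNIV F" for F :: "real \<Rightarrow> real"
    using continuous_on_subset[OF that] by simp
  show ?thesis
  proof (rule exI[of _ "m + 2"], intro conjI exI[of _ C] allI impI ballI)
  qed (use assms \<open>C > 0\<close> in \<open>auto intro: is_sol_exists[OF assms] is_sol_unique[OF assms]
         is_sol_C2_estimate[OF assms, folded C_def] restrict\<close>)
qed

end
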